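(* In the setting below, let $p\neq0$, $a_0,a_2,a_3$ be real constants with $a_2\neq0$, suppose $M$ has constant sectional curvature $K=\dfrac{a_0}{a_2s^2}$, and put $\tilde\theta=-2p\theta$, $\omega_1=a_0\alpha_0+a_2\alpha_2+a_3\,d\theta$ (so $d\omega_1=0$). A natural SU(2)-structure $(\tilde\theta,\omega_1,\omega_2,\omega_3)$ on $\mathcal S$ with these $\tilde\theta,\omega_1$ is double-hypo if and only if there are real constants $b_0,b_1,b_2$ with $$\omega_2=b_0\alpha_0+b_1\alpha_1+b_2\alpha_2,\qquad \omega_3=\frac{Kb_1}{3p}\alpha_0+\frac{s^2Kb_2-b_0}{6s^2p}\alpha_1-\frac{b_1}{3s^2p}\alpha_2,$$ satisfying $$a_3^2-a_0a_2=a_3p,\quad b_1^2-b_0b_2=a_3p,\quad a_0b_2+a_2b_0=0,\quad b_0^2-2s^2Kb_0b_2+s^4K^2b_2^2+4s^2Kb_1^2=36s^4a_3p^3,$$ together with $a_0a_2>0$ and $a_3p>0$. Moreover, in this case $M$ has positive constant sectional curvature $K=9s^2p^2$.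
   Context: Let $(M,g)$ be a connected oriented Riemannian 3-manifold, $s>0$, and $\mathcal S=\{u\in TM:\|u\|=s\}$ the total space of the radius-$s$ tangent sphere bundle with the canonical (Sasaki-induced) metric. An adapted frame at $u\in\mathcal S$: take a positively oriented orthonormal frame $(f_0=u/s,f_1,f_2)$ of $T_{\pi(u)}M$ and set $e_0=f_0^h,e_1=f_1^h,e_2=f_2^h,e_3=f_1^v,e_4=f_2^v$ (horizontal and vertical lifts); dual coframe $e^0,\dots,e^4$, $e^{ij}=e^i\wedge e^j$. Globally defined forms: $\theta=s\,e^0$, $\alpha_0=e^{12}$, $\alpha_1=e^{14}-e^{23}$, $\alpha_2=e^{34}$, $d\theta=e^{31}+e^{42}$; $\alpha_i\wedge d\theta=0$, $\alpha_0\wedge\alpha_1=\alpha_2\wedge\alpha_1=0$, $\alpha_0\wedge\alpha_2=-\frac12\alpha_1\wedge\alpha_1=-\frac12 d\theta\wedge d\theta=e^{1234}$. For constant sectional curvature $K$: $d\alpha_0=s^{-2}\theta\wedge\alpha_1$, $d\alpha_1=2s^{-2}\theta\wedge\alpha_2-2K\theta\wedge\alpha_0$, $d\alpha_2=-K\theta\wedge\alpha_1$. An SU(2)-structure: $(\tilde\theta,\omega_1,\omega_2,\omega_3)$ with (C1) $\tilde\theta\wedge\omega_1\wedge\omega_1\neq0$, $\omega_i\wedge\omega_j=0$ ($i\ne j$), $\omega_1\wedge\omega_1=\omega_2\wedge\omega_2=\omega_3\wedge\omega_3=2v$, $v$ nowhere zero; (C2) $x\lrcorner\omega_1=y\lrcorner\omega_2\Rightarrow\omega_3(x,y)\ge0$.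 Hypo: $d\omega_1=0$, $d(\tilde\theta\wedge\omega_2)=d(\tilde\theta\wedge\omega_3)=0$. Nearly-hypo: $d\omega_2=3\tilde\theta\wedge\omega_3$, $d(\tilde\theta\wedge\omega_1)=-2\omega_1\wedge\omega_1$. Double-hypo: both hypo and nearly-hypo. Natural SU(2)-structure on $\mathcal S$: $\tilde\theta=-2p\theta$ ($p\ne0$ constant), each $\omega_i$ a constant-coefficient combination of $\alpha_0,\alpha_1,\alpha_2,d\theta$. *)

theory Defs
  imports Complex_Main
begin

text \<open>Pointwise (frame-level) model of the canonical tangent sphere bundle of a
3-manifold of constant sectional curvature K.  Differential forms at a point are
represented in the adapted coframe e^0,...,e^4: a form is a function from index
sets (subsets of {0..4}) to real coefficients, i.e. the coefficient of e^{i1...ik}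
with i1<...<ik.  Natural forms have constant coefficients in adapted frames, so all
conditions below are pointwise identities in this exterior algebra.\<close>

type_synonym form = "nat set \<Rightarrow> real"

definition zf :: form where "zf = (\<lambda>S. 0)"

definition fadd :: "form \<Rightarrow> form \<Rightarrow> form" where
  "fadd a b = (\<lambda>S. a S + b S)"

definition fsc :: "real \<Rightarrow> form \<Rightarrow> form" where
  "fsc c a = (\<lambda>S. c * a S)"

definition ef :: "nat \<Rightarrow> form" where
  "ef i = (\<lambda>S. if S = {i} then 1 else 0)"

text \<open>sign of the shuffle putting A before B into increasing order\<close>
definition wsgn :: "nat set \<Rightarrow> nat set \<Rightarrow> real" where
  "wsgn A B = (-1) ^ card {(a, b). a \<in> A \<and> b \<in> B \<and> b < a}"

definition wedge :: "form \<Rightarrow> form \<Rightarrow> form" where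
  "wedge \<alpha> \<beta> = (\<lambda>S. if S \<subseteq> {..<5}
      then (\<Sum>A\<in>Pow S. wsgn A (S - A) * \<alpha> A * \<beta> (S - A)) else 0)"

definition ev2 :: "form \<Rightarrow> (nat \<Rightarrow> real) \<Rightarrow> (nat \<Rightarrow> real) \<Rightarrow> real" where
  "ev2 \<omega> x y = (\<Sum>i<5. \<Sum>j<5. if i < j then \<omega> {i, j} * (x i * y j - x j * y i) else 0)"

definition theta :: "real \<Rightarrow> form" where "theta s = fsc s (ef 0)"
definition alpha0 :: form where "alpha0 = wedge (ef 1) (ef 2)"
definition alpha1 :: form where
  "alpha1 = fadd (wedge (ef 1) (ef 4)) (fsc (-1) (wedge (ef 2) (ef 3)))"
definition alpha2 :: form where "alpha2 = wedge (ef 3) (ef 4)"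
definition dtheta :: form where "dtheta = fadd (wedge (ef 3) (ef 1)) (wedge (ef 4) (ef 2))"

fun comb :: "real \<times> real \<times> real \<times> real \<Rightarrow> form" where
  "comb (c0, c1, c2, c3) = (\<lambda>S. c0 * alpha0 S + c1 * alpha1 S + c2 * alpha2 S + c3 * dtheta S)"

text \<open>exterior derivative of a natural 2-form, via the structure equations for constant
sectional curvature K:  d alpha_0 = s^-2 theta^alpha_1,
d alpha_1 = 2 s^-2 theta^alpha_2 - 2K theta^alpha_0, d alpha_2 = -K theta^alpha_1, d(d theta) = 0\<close>
fun dcomb :: "real \<Rightarrow> real \<Rightarrow> real \<times> real \<times> real \<times> real \<Rightarrow> form" where
  "dcomb s K (c0, c1, c2, c3) =
     wedge (theta s) (comb (- 2 * K * c1, c0 / s^2 - K * c2, 2 * c1 / s^2, 0))"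

text \<open>d(theta~ ^ omega) for theta~ = -2p theta and omega a natural 2-form:
 d theta~ ^ omega - theta~ ^ d omega\<close>
definition dthw :: "real \<Rightarrow> real \<Rightarrow> real \<Rightarrow> real \<times> real \<times> real \<times> real \<Rightarrow> form" where
  "dthw s K p c = fadd (fsc (- 2 * p) (wedge dtheta (comb c)))
                       (fsc (2 * p) (wedge (theta s) (dcomb s K c)))"

definition SU2 :: "form \<Rightarrow> form \<Rightarrow> form \<Rightarrow> form \<Rightarrow> bool" where
  "SU2 th w1 w2 w3 \<longleftrightarrow>
     wedge th (wedge w1 w1) \<noteq> zf \<and>
     wedge w1 w2 = zf \<and> wedge w1 w3 = zf \<and> wedge w2 w3 = zf \<and>
     wedge w2 w1 = zf \<and> wedge w3 w1 = zf \<and> wedge w3 w2 = zf \<and>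
     (\<exists>v. v \<noteq> zf \<and> wedge w1 w1 = fsc 2 v \<and> wedge w2 w2 = fsc 2 v \<and> wedge w3 w3 = fsc 2 v) \<and>
     (\<forall>x y. (\<forall>z. ev2 w1 x z = ev2 w2 y z) \<longrightarrow> ev2 w3 x y \<ge> 0)"

definition hypo :: "real \<Rightarrow> real \<Rightarrow> real \<Rightarrow> _ \<Rightarrow> _ \<Rightarrow> _ \<Rightarrow> bool" where
  "hypo s K p c1 c2 c3 \<longleftrightarrow> dcomb s K c1 = zf \<and> dthw s K p c2 = zf \<and> dthw s K p c3 = zf"

definition nearly_hypo :: "real \<Rightarrow> real \<Rightarrow> real \<Rightarrow> _ \<Rightarrow> _ \<Rightarrow> _ \<Rightarrow> bool" where
  "nearly_hypo s K p c1 c2 c3 \<longleftrightarrow>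
     dcomb s K c2 = fsc 3 (wedge (fsc (- 2 * p) (theta s)) (comb c3)) \<and>
     dthw s K p c1 = fsc (- 2) (wedge (comb c1) (comb c1))"

definition double_hypo :: "real \<Rightarrow> real \<Rightarrow> real \<Rightarrow> _ \<Rightarrow> _ \<Rightarrow> _ \<Rightarrow> bool" where
  "double_hypo s K p c1 c2 c3 \<longleftrightarrow> hypo s K p c1 c2 c3 \<and> nearly_hypo s K p c1 c2 c3"

end

theory Submission imports Defs "HOL-Library.Nat_Bijection" begin

text \<open>All forms involved are constant-coefficient combinations of the basis forms
e^T, so every condition is a finite system of equations between coefficients.
Hypo forces omega_2, omega_3 to have no d theta-component and d omega_1 = 0 forces
a_0 = K s^2 a_2; nearly-hypo then expresses omega_3 linearly through omega_2 and
yields a_3^2 - a_0 a_2 = a_3 p. Substituting omega_3 gives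
9 s^2 p^2 (omega_3 \<and> omega_3) = K (omega_2 \<and> omega_2), and the SU(2) normalisation
omega_2 \<and> omega_2 = omega_3 \<and> omega_3 = omega_1 \<and> omega_1 \<noteq> 0 then pins down K = 9 s^2 p^2.\<close>

definition ebasis :: "nat set \<Rightarrow> form" where
  "ebasis T = (\<lambda>S. if S = T then 1 else 0)"

text \<open>Lets simp decide equality of concrete finite sets of numerals.\<close>
lemma finite_set_eq_iff_set_encode:
  "finite A \<Longrightarrow> finite B \<Longrightarrow> A = B \<longleftrightarrow> set_encode A = set_encode B"
  by (simp add: set_encode_eq)

lemma wsgn_eq_sum:
  assumes "finite A" "finite B"
  shows "wsgn A B = (-1) ^ (\<Sum>a\<in>A. \<Sum>b\<in>B. if b < a then 1 else 0)"
proof -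
  have "{(a, b). a \<in> A \<and> b \<in> B \<and> b < a} = Sigma A (\<lambda>a. {b\<in>B. b < a})" by blast
  moreover have "card (Sigma A (\<lambda>a. {b\<in>B. b < a})) = (\<Sum>a\<in>A. card {b\<in>B. b < a})"
    using assms by (intro card_SigmaI) auto
  moreover have "card {b\<in>B. b < a} = (\<Sum>b\<in>B. if b < a then 1 else 0)" for a
    using assms(2) by (simp only: card_eq_sum sum.inter_filter)
  ultimately show ?thesis unfolding wsgn_def by simp
qed

lemma wedge_ebasis_disjoint:
  assumes "A \<inter> B = {}" "A \<union> B \<subseteq> {..<5}"
  shows "wedge (ebasis A) (ebasis B) = fsc (wsgn A B) (ebasis (A \<union> B))"
proof
  fix S
  show "wedge (ebasis A) (ebasis B) S = fsc (wsgn A B) (ebasis (A \<union> B)) S"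
  proof (cases "S \<subseteq> {..<5}")
    case True
    then have "finite (Pow S)" using finite_subset by blast
    have "wedge (ebasis A) (ebasis B) S
        = (\<Sum>X\<in>Pow S. wsgn X (S - X) * ebasis A X * ebasis B (S - X))"
      using True by (simp add: wedge_def)
    also have "\<dots> = (\<Sum>X\<in>Pow S. if X = A then (if S - A = B then wsgn A B else 0) else 0)"
      by (rule sum.cong) (auto simp: ebasis_def)
    also have "\<dots> = (if A \<subseteq> S \<and> S - A = B then wsgn A B else 0)"
      using \<open>finite (Pow S)\<close> by (simp add: sum.delta')
    also have "\<dots> = fsc (wsgn A B) (ebasis (A \<union> B)) S"
      unfolding fsc_def ebasis_def using assms by auto
    finally show ?thesis .
  next
    case False
    then have "S \<noteq> A \<union> B" using assms by auto
    with False show ?thesis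
      unfolding wedge_def fsc_def ebasis_def by simp
  qed
qed

lemma wedge_ebasis_overlap:
  "A \<inter> B \<noteq> {} \<Longrightarrow> wedge (ebasis A) (ebasis B) = zf"
  unfolding wedge_def ebasis_def zf_def by (rule ext) (auto intro!: sum.neutral split: if_splits)

lemma wedge_fadd_left: "wedge (fadd a b) c = fadd (wedge a c) (wedge b c)"
  unfolding wedge_def fadd_def by (simp add: distrib_left distrib_right sum.distrib fun_eq_iff)

lemma wedge_fadd_right: "wedge c (fadd a b) = fadd (wedge c a) (wedge c b)"
  unfolding wedge_def fadd_def by (simp add: distrib_left distrib_right sum.distrib fun_eq_iff)

lemma wedge_fsc_left: "wedge (fsc k a) c = fsc k (wedge a c)"
  unfolding wedge_def fsc_def by (simp add: sum_distrib_left mult_ac fun_eq_iff)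

lemma wedge_fsc_right: "wedge c (fsc k a) = fsc k (wedge c a)"
  unfolding wedge_def fsc_def by (simp add: sum_distrib_left mult_ac fun_eq_iff)

lemma fsc_one: "fsc 1 x = x"
  unfolding fsc_def by simp

lemma fsc_fsc: "fsc a (fsc b x) = fsc (a * b) x"
  unfolding fsc_def by (simp add: mult.assoc)

lemma fsc_fadd: "fsc k (fadd a b) = fadd (fsc k a) (fsc k b)"
  unfolding fadd_def fsc_def by (simp add: algebra_simps)

lemma fadd_fsc_same: "fadd (fsc a X) (fsc b X) = fsc (a + b) X"
  unfolding fadd_def fsc_def by (simp add: algebra_simps)

lemma fadd_fsc_same_assoc: "fadd (fsc a X) (fadd (fsc b X) Y) = fadd (fsc (a + b) X) Y"
  unfolding fadd_def fsc_def by (simp add: algebra_simps)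

lemma fsc_zf: "fsc a zf = zf"
  unfolding fsc_def zf_def by simp

lemma fadd_zf_left: "fadd zf x = x"
  unfolding fadd_def zf_def by simp

lemma fadd_zf_right: "fadd x zf = x"
  unfolding fadd_def zf_def by simp

lemma ef_eq_ebasis: "ef i = ebasis {i}"
  unfolding ef_def ebasis_def by simp

lemma fsc_ebasis_eq_iff: "fsc a (ebasis T) = fsc b (ebasis T) \<longleftrightarrow> a = b"
  by (auto simp: fsc_def ebasis_def fun_eq_iff)

lemma fsc_ebasis_eq_zf_iff: "fsc a (ebasis T) = zf \<longleftrightarrow> a = 0"
  by (auto simp: fsc_def ebasis_def zf_def fun_eq_iff)

lemmas wedge_ebasis_simps = wedge_fadd_left wedge_fadd_right wedge_fsc_left wedge_fsc_right
  wedge_ebasis_disjoint wedge_ebasis_overlap wsgn_eq_sum fsc_one fsc_fsc fsc_zf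
  fadd_zf_left fadd_zf_right ef_eq_ebasis

lemma theta_ebasis: "theta s = fsc s (ebasis {0})"
  unfolding theta_def by (simp add: ef_eq_ebasis)

lemma comb_ebasis:
  "comb (c0, c1, c2, c3) =
     fadd (fsc c0 (ebasis {1,2})) (fadd (fsc c1 (ebasis {1,4})) (fadd (fsc (- c1) (ebasis {2,3}))
       (fadd (fsc c2 (ebasis {3,4})) (fadd (fsc (- c3) (ebasis {1,3})) (fsc (- c3) (ebasis {2,4}))))))"
proof -
  have basis_forms: "alpha0 = ebasis {1,2}" "alpha1 = fadd (ebasis {1,4}) (fsc (-1) (ebasis {2,3}))"
    "alpha2 = ebasis {3,4}" "dtheta = fadd (fsc (-1) (ebasis {1,3})) (fsc (-1) (ebasis {2,4}))"
    unfolding alpha0_def alpha1_def alpha2_def dtheta_def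
    by (simp_all add: wedge_ebasis_simps insert_commute)
  show ?thesis
    by (simp only: comb.simps basis_forms) (simp add: fadd_def fsc_def fun_eq_iff algebra_simps)
qed

lemma comb_eq_iff:
  "comb (x0, x1, x2, x3) = comb (y0, y1, y2, y3) \<longleftrightarrow> x0 = y0 \<and> x1 = y1 \<and> x2 = y2 \<and> x3 = y3"
proof
  assume eq: "comb (x0, x1, x2, x3) = comb (y0, y1, y2, y3)"
  have "comb (x0, x1, x2, x3) T = comb (y0, y1, y2, y3) T" for T
    using eq by simp
  from this[of "{1,2}"] this[of "{1,4}"] this[of "{3,4}"] this[of "{1,3}"]
  show "x0 = y0 \<and> x1 = y1 \<and> x2 = y2 \<and> x3 = y3"
    unfolding comb_ebasis by (simp add: fsc_def fadd_def ebasis_def finite_set_eq_iff_set_encode)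
qed simp

fun pairing :: "real \<times> real \<times> real \<times> real \<Rightarrow> real \<times> real \<times> real \<times> real \<Rightarrow> real" where
  "pairing (x0, x1, x2, x3) (y0, y1, y2, y3) = x0 * y2 + x2 * y0 - 2 * x1 * y1 - 2 * x3 * y3"

lemma wedge_comb_comb:
  "wedge (comb x) (comb y) = fsc (pairing x y) (ebasis {1,2,3,4})"
proof -
  obtain x0 x1 x2 x3 y0 y1 y2 y3 where "x = (x0, x1, x2, x3)" "y = (y0, y1, y2, y3)"
    by (cases x, cases y) auto
  then show ?thesis
    by (simp only: comb_ebasis) (simp add: wedge_ebasis_simps insert_commute
      fadd_fsc_same fadd_fsc_same_assoc algebra_simps)
qed

fun comb3 :: "real \<times> real \<times> real \<times> real \<Rightarrow> form" where
  "comb3 (c0, c1, c2, c3) =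
     fadd (fsc c0 (ebasis {0,1,2})) (fadd (fsc c1 (ebasis {0,1,4})) (fadd (fsc (- c1) (ebasis {0,2,3}))
       (fadd (fsc c2 (ebasis {0,3,4})) (fadd (fsc (- c3) (ebasis {0,1,3})) (fsc (- c3) (ebasis {0,2,4}))))))"

lemma theta_wedge_comb: "wedge (theta s) (comb (x0, x1, x2, x3)) = fsc s (comb3 (x0, x1, x2, x3))"
  unfolding comb_ebasis theta_ebasis
  by (simp add: wedge_ebasis_simps insert_commute fsc_fadd mult.commute)

lemma fsc_comb3: "fsc k (comb3 (x0, x1, x2, x3)) = comb3 (k * x0, k * x1, k * x2, k * x3)"
  by (simp add: fsc_fadd fsc_fsc)

lemma comb3_eq_iff:
  "comb3 (x0, x1, x2, x3) = comb3 (y0, y1, y2, y3) \<longleftrightarrow> x0 = y0 \<and> x1 = y1 \<and> x2 = y2 \<and> x3 = y3"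
proof
  assume eq: "comb3 (x0, x1, x2, x3) = comb3 (y0, y1, y2, y3)"
  have "comb3 (x0, x1, x2, x3) T = comb3 (y0, y1, y2, y3) T" for T
    using eq by simp
  from this[of "{0,1,2}"] this[of "{0,1,4}"] this[of "{0,3,4}"] this[of "{0,1,3}"]
  show "x0 = y0 \<and> x1 = y1 \<and> x2 = y2 \<and> x3 = y3"
    by (simp add: fsc_def fadd_def ebasis_def finite_set_eq_iff_set_encode)
qed simp

lemma comb3_zero: "comb3 (0, 0, 0, 0) = zf"
  by (simp add: fsc_def zf_def fadd_def)

lemma dcomb_eq_comb3:
  "dcomb s K (c0, c1, c2, c3) = comb3 (s * (- 2 * K * c1), s * (c0 / s^2 - K * c2), s * (2 * c1 / s^2), 0)"
  by (simp only: dcomb.simps theta_wedge_comb fsc_comb3) simp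

lemma dthw_eq: "dthw s K p (c0, c1, c2, c3) = fsc (4 * p * c3) (ebasis {1,2,3,4})"
proof -
  have dtheta_comb: "dtheta = comb (0, 0, 0, 1)"
    unfolding comb_ebasis dtheta_def by (simp add: wedge_ebasis_simps fsc_def fadd_def fun_eq_iff)
  show ?thesis
    unfolding dthw_def dtheta_comb wedge_comb_comb dcomb_eq_comb3 theta_ebasis
    by (simp add: wedge_ebasis_simps insert_commute fsc_fadd mult.assoc)
qed

lemma dcomb_eq_zf_iff:
  "s \<noteq> 0 \<Longrightarrow> dcomb s K (x0, x1, x2, x3) = zf \<longleftrightarrow> x1 = 0 \<and> x0 = K * s^2 * x2"
  unfolding dcomb_eq_comb3 comb3_zero[symmetric] comb3_eq_iff by (auto simp: field_simps)

lemma hypo_iff: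
  assumes "s \<noteq> 0" "p \<noteq> 0"
  shows "hypo s K p (a0, a1, a2, a3) (c0, c1, c2, c3) (f0, f1, f2, f3) \<longleftrightarrow>
           a1 = 0 \<and> a0 = K * s^2 * a2 \<and> c3 = 0 \<and> f3 = 0"
  unfolding hypo_def dcomb_eq_zf_iff[OF assms(1)] dthw_eq fsc_ebasis_eq_zf_iff
  using assms(2) by simp

lemma nearly_hypo_iff:
  assumes "s \<noteq> 0" "p \<noteq> 0"
  shows "nearly_hypo s K p (a0, a1, a2, a3) (c0, c1, c2, c3) (f0, f1, f2, f3) \<longleftrightarrow>
           3 * p * f0 = K * c1 \<and> 6 * s^2 * p * f1 = s^2 * K * c2 - c0 \<and>
           3 * s^2 * p * f2 = - c1 \<and> f3 = 0 \<and> a1^2 + a3^2 - a0 * a2 = a3 * p"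
proof -
  have cancel_s: "s * (c0 / s^2 - K * c2) = (c0 - K * s^2 * c2) / s"
    "s * (2 * c1 / s^2) = 2 * c1 / s"
    using assms(1) by (simp_all add: field_simps power2_eq_square)
  show ?thesis
    unfolding nearly_hypo_def dcomb_eq_comb3 wedge_fsc_left theta_wedge_comb fsc_fsc fsc_comb3
      comb3_eq_iff dthw_eq wedge_comb_comb fsc_ebasis_eq_iff cancel_s
    using assms by (auto simp: field_simps power2_eq_square)
qed

lemma double_hypo_iff:
  assumes "s \<noteq> 0" "p \<noteq> 0"
  shows "double_hypo s K p (a0, a1, a2, a3) (c0, c1, c2, c3) (f0, f1, f2, f3) \<longleftrightarrow>
           a1 = 0 \<and> a0 = K * s^2 * a2 \<and> c3 = 0 \<and> f3 = 0 \<and>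
           3 * p * f0 = K * c1 \<and> 6 * s^2 * p * f1 = s^2 * K * c2 - c0 \<and>
           3 * s^2 * p * f2 = - c1 \<and> a3^2 - a0 * a2 = a3 * p"
  unfolding double_hypo_def hypo_iff[OF assms] nearly_hypo_iff[OF assms] by auto

lemma SU2_comb_pairings:
  assumes "SU2 th (comb a) (comb c) (comb f)"
  shows "pairing a c = 0" "pairing c c = pairing a a" "pairing f f = pairing a a"
    and "pairing a a \<noteq> 0"
proof -
  let ?vol = "ebasis {1,2,3,4}"
  obtain v where "fsc (pairing a c) ?vol = zf" and "v \<noteq> zf"
    and a: "fsc (pairing a a) ?vol = fsc 2 v" and c: "fsc (pairing c c) ?vol = fsc 2 v"
    and f: "fsc (pairing f f) ?vol = fsc 2 v"
    using assms unfolding SU2_def wedge_comb_comb by blast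
  then show "pairing a c = 0" "pairing c c = pairing a a" "pairing f f = pairing a a"
    by (metis fsc_ebasis_eq_zf_iff fsc_ebasis_eq_iff)+
  show "pairing a a \<noteq> 0"
  proof
    assume "pairing a a = 0"
    then have "fsc 2 v = zf"
      using a fsc_ebasis_eq_zf_iff by metis
    then have "fsc (1/2) (fsc 2 v) = zf"
      by (simp add: fsc_zf)
    with \<open>v \<noteq> zf\<close> show False by (simp add: fsc_fsc fsc_one)
  qed
qed

lemma double_hypo_curvature:
  fixes s p K a0 a2 a3 c0 c1 c2 f0 f1 f2 :: real
  assumes "s > 0" "p \<noteq> 0" "a2 \<noteq> 0" "a0 = K * s^2 * a2"
    and "a0 * c2 + a2 * c0 = 0"
    and "c1^2 - c0 * c2 = a3 * p" "f1^2 - f0 * f2 = a3 * p" "a3 * p \<noteq> 0"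
    and "3 * p * f0 = K * c1" "6 * s^2 * p * f1 = s^2 * K * c2 - c0" "3 * s^2 * p * f2 = - c1"
  shows "K = 9 * s^2 * p^2" and "a3 * p > 0" and "a0 * a2 > 0"
    and "c0^2 - 2 * s^2 * K * c0 * c2 + s^4 * K^2 * c2^2 + 4 * s^2 * K * c1^2 = 36 * s^4 * a3 * p^3"
proof -
  have c0: "c0 = - K * s^2 * c2"
  proof -
    have "a2 * (K * s^2 * c2 + c0) = 0" using assms(4,5) by (simp add: algebra_simps)
    then have "K * s^2 * c2 + c0 = 0" using assms(3) by simp
    then show ?thesis by (simp add: algebra_simps)
  qed
  have c_norm: "c1^2 + K * s^2 * c2^2 = a3 * p"
    using assms(6) c0 by (simp add: algebra_simps power2_eq_square)
  have f1: "3 * p * f1 = K * c2"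
    using assms(1,10) c0 by (simp add: algebra_simps power2_eq_square)
  have "9 * p^2 * s^2 * (f1^2 - f0 * f2) = s^2 * (3 * p * f1)^2 - (3 * p * f0) * (3 * s^2 * p * f2)"
    by (simp add: algebra_simps power2_eq_square)
  also have "\<dots> = K * (c1^2 + K * s^2 * c2^2)"
    using assms(9,11) f1 by (simp add: algebra_simps power2_eq_square)
  finally have "9 * p^2 * s^2 * (a3 * p) = K * (a3 * p)"
    using assms(7) c_norm by simp
  then show K: "K = 9 * s^2 * p^2"
    using assms(8) by (simp add: algebra_simps)
  then have "K > 0" using assms(1,2) by simp
  then show "a3 * p > 0"
    using c_norm assms(8) by (smt (verit) mult_nonneg_nonneg zero_le_power2)
  have "a0 * a2 = K * (s * a2)^2" using assms(4) by (simp add: power2_eq_square)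
  then show "a0 * a2 > 0"
    using assms(1,3) \<open>K > 0\<close> by simp
  have "c0^2 - 2 * s^2 * K * c0 * c2 + s^4 * K^2 * c2^2 + 4 * s^2 * K * c1^2
      = 4 * s^2 * K * (c1^2 + K * s^2 * c2^2)"
    using c0 by (simp add: algebra_simps power2_eq_square power4_eq_xxxx)
  also have "\<dots> = 36 * s^4 * a3 * p^3"
    using c_norm K by (simp add: algebra_simps power2_eq_square power4_eq_xxxx power3_eq_cube)
  finally show "c0^2 - 2 * s^2 * K * c0 * c2 + s^4 * K^2 * c2^2 + 4 * s^2 * K * c1^2
      = 36 * s^4 * a3 * p^3" .
qed

theorem mainTheorem10:
  fixes s p K a0 a2 a3 :: real and c f :: "real \<times> real \<times> real \<times> real"
  assumes "s > 0" and "p \<noteq> 0" and "a2 \<noteq> 0"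
    and "K = a0 / (a2 * s^2)"
    and "SU2 (fsc (- 2 * p) (theta s)) (comb (a0, 0, a2, a3)) (comb c) (comb f)"
  shows "(double_hypo s K p (a0, 0, a2, a3) c f \<longleftrightarrow>
          (\<exists>b0 b1 b2.
             comb c = comb (b0, b1, b2, 0) \<and>
             comb f = comb (K * b1 / (3 * p), (s^2 * K * b2 - b0) / (6 * s^2 * p),
                            - b1 / (3 * s^2 * p), 0) \<and>
             a3^2 - a0 * a2 = a3 * p \<and>
             b1^2 - b0 * b2 = a3 * p \<and>
             a0 * b2 + a2 * b0 = 0 \<and>
             b0^2 - 2 * s^2 * K * b0 * b2 + s^4 * K^2 * b2^2 + 4 * s^2 * K * b1^2
               = 36 * s^4 * a3 * p^3 \<and>
             a0 * a2 > 0 \<and> a3 * p > 0))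
       \<and> (double_hypo s K p (a0, 0, a2, a3) c f \<longrightarrow> K > 0 \<and> K = 9 * s^2 * p^2)"
proof -
  obtain c0 c1 c2 c3 where c: "c = (c0, c1, c2, c3)" by (cases c)
  obtain f0 f1 f2 f3 where f: "f = (f0, f1, f2, f3)" by (cases f)
  have s: "s \<noteq> 0" using assms(1) by simp
  have a0: "a0 = K * s^2 * a2" using assms(1,3,4) by (simp add: field_simps)
  note pairings = SU2_comb_pairings[OF assms(5), unfolded c f pairing.simps]
  have dh: "double_hypo s K p (a0, 0, a2, a3) c f \<longleftrightarrow>
      c3 = 0 \<and> f3 = 0 \<and> 3 * p * f0 = K * c1 \<and> 6 * s^2 * p * f1 = s^2 * K * c2 - c0 \<and>
      3 * s^2 * p * f2 = - c1 \<and> a3^2 - a0 * a2 = a3 * p"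
    unfolding c f double_hypo_iff[OF s assms(2)] using a0 by simp
  show ?thesis
  proof (cases "double_hypo s K p (a0, 0, a2, a3) c f")
    case True
    then have coords: "c3 = 0" "f3 = 0" "3 * p * f0 = K * c1"
      "6 * s^2 * p * f1 = s^2 * K * c2 - c0" "3 * s^2 * p * f2 = - c1"
      "a3^2 - a0 * a2 = a3 * p" using dh by auto
    with pairings have pairing_eqs: "a0 * c2 + a2 * c0 = 0" "c1^2 - c0 * c2 = a3 * p"
      "f1^2 - f0 * f2 = a3 * p" "a3 * p \<noteq> 0"
      by (simp_all add: algebra_simps power2_eq_square)
    note curvature = double_hypo_curvature[OF assms(1-3) a0 pairing_eqs coords(3-5)]
    show ?thesis
      unfolding c f comb_eq_iff using True[unfolded c f] coords pairing_eqs curvature s assms(2)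
      by (auto simp: field_simps)
  next
    case False
    then show ?thesis
      unfolding c f comb_eq_iff using False[unfolded c f] dh[unfolded c f] s assms(2)
      by (auto simp: field_simps)
  qed
qed

end
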